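(* Let $A$ be a bounded linear operator on a complex Hilbert space $\mathcal{H}$, and let $W(A) = \{\langle Ax, x\rangle : x \in \mathcal{H}, \|x\| = 1\}$ be its numerical range. Then \[ \|A^*A - AA^*\| \le 2\, S(W(A)), \] where $S(W(A))$ denotes the area (planar Lebesgue measure) of $W(A) \subset \mathbb{C}$. *)

theory Defs
  imports "HOL-Analysis.Analysis"
begin

text \<open>The distribution has no complex vector spaces / complex inner product spaces,
so we introduce them as a type class: a real normed vector space carrying a complex
scalar multiplication (compatible with the real one) and a complex inner product
(linear in the first argument, conjugate symmetric, positive definite) inducing the norm.\<close>

class complex_inner = real_normed_vector +
  fixes scaleC :: "complex \<Rightarrow> 'a \<Rightarrow> 'a"
    and cinner :: "'a \<Rightarrow> 'a \<Rightarrow> complex"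
  assumes scaleC_of_real: "scaleC (complex_of_real r) x = scaleR r x"
    and scaleC_add_right: "scaleC c (x + y) = scaleC c x + scaleC c y"
    and scaleC_add_left: "scaleC (c + d) x = scaleC c x + scaleC d x"
    and scaleC_scaleC: "scaleC c (scaleC d x) = scaleC (c * d) x"
    and scaleC_one: "scaleC 1 x = x"
    and cinner_add_left: "cinner (x + y) z = cinner x z + cinner y z"
    and cinner_scaleC_left: "cinner (scaleC c x) y = c * cinner x y"
    and cinner_commute: "cinner y x = cnj (cinner x y)"
    and cinner_self_real_nonneg: "Im (cinner x x) = 0 \<and> Re (cinner x x) \<ge> 0"
    and cinner_self_eq_zero: "cinner x x = 0 \<longleftrightarrow> x = 0"
    and norm_eq_sqrt_cinner: "norm x = sqrt (Re (cinner x x))"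

class complex_hilbert = complex_inner + complete_space

definition bounded_clinear_op :: "('a::complex_inner \<Rightarrow> 'a) \<Rightarrow> bool" where
  "bounded_clinear_op A \<longleftrightarrow>
     (\<forall>x y. A (x + y) = A x + A y) \<and>
     (\<forall>c x. A (scaleC c x) = scaleC c (A x)) \<and>
     (\<exists>K. \<forall>x. norm (A x) \<le> K * norm x)"

definition is_adjoint :: "('a::complex_inner \<Rightarrow> 'a) \<Rightarrow> ('a \<Rightarrow> 'a) \<Rightarrow> bool" where
  "is_adjoint A B \<longleftrightarrow> (\<forall>x y. cinner (A x) y = cinner x (B y))"

definition numerical_range :: "('a::complex_inner \<Rightarrow> 'a) \<Rightarrow> complex set" where
  "numerical_range A = {cinner (A x) x | x. norm x = 1}"

end

theory Submission
  imports Defs "HOL-Library.Quadratic_Discriminant"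
begin

text \<open>
  For a unit vector \<open>z\<close> the quadratic form of the self-commutator is
  \<open>\<langle>(A\<^sup>*A - AA\<^sup>*) z, z\<rangle> = \<parallel>Az\<parallel>\<^sup>2 - \<parallel>A\<^sup>*z\<parallel>\<^sup>2\<close>, and by polarization its supremum over the unit
  sphere bounds the operator norm. Fix a unit \<open>x\<close> and write \<open>Ax = a x + p\<close>, \<open>A\<^sup>*x = a\<^sup>* x + q\<close>
  with \<open>p, q \<perp> x\<close>; then \<open>\<parallel>Ax\<parallel>\<^sup>2 - \<parallel>A\<^sup>*x\<parallel>\<^sup>2 = \<parallel>p\<parallel>\<^sup>2 - \<parallel>q\<parallel>\<^sup>2\<close>. Taking a unit \<open>w \<perp> x\<close> in the
  direction of the longer of \<open>p, q\<close>, the compression of \<open>A\<close> to \<open>span {x, w}\<close> has off-diagonal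
  entries \<open>c, b\<close> with \<open>\<bar>\<parallel>p\<parallel>\<^sup>2 - \<parallel>q\<parallel>\<^sup>2\<bar> \<le> \<bar>\<bar>c\<bar>\<^sup>2 - \<bar>b\<bar>\<^sup>2\<bar>\<close>. The numerical range of this compression
  lies in \<open>W(A)\<close>; it is the image of a ball in \<open>\<real> \<times> \<complex>\<close> under the affine map
  \<open>(s, \<zeta>) \<mapsto> (a + d)/2 + s (a - d) + c \<zeta> + b \<zeta>\<^sup>*\<close> with \<open>d = \<langle>Aw, w\<rangle>\<close>, so it contains the image of a square of area
  \<open>1/2\<close> in the \<open>\<zeta>\<close>-plane, a parallelogram of area \<open>\<bar>\<bar>c\<bar>\<^sup>2 - \<bar>b\<bar>\<^sup>2\<bar> / 2\<close>. The same picture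
  gives convexity of \<open>W(A)\<close> (Toeplitz--Hausdorff), hence its measurability.
\<close>

section \<open>Complex inner product spaces\<close>

lemma cinner_add_right: "cinner x (y + z) = cinner x y + cinner x z"
  by (metis cinner_add_left cinner_commute complex_cnj_add)

lemma cinner_scaleC_right: "cinner x (scaleC c y) = cnj c * cinner x y"
  by (metis cinner_commute cinner_scaleC_left complex_cnj_mult)

lemma cinner_scaleR_left: "cinner (scaleR r x) y = of_real r * cinner x y"
  by (metis cinner_scaleC_left scaleC_of_real)

lemma cinner_scaleR_right: "cinner x (scaleR r y) = of_real r * cinner x y"
  by (metis cinner_scaleC_right scaleC_of_real complex_cnj_complex_of_real)

lemma scaleC_zero_left [simp]: "scaleC 0 x = 0"
  using scaleC_of_real[of 0 x] by simp

lemma cinner_zero_left [simp]: "cinner 0 y = 0"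
  using cinner_scaleR_left[of 0 0 y] by simp

lemma cinner_zero_right [simp]: "cinner x 0 = 0"
  using cinner_scaleR_right[of x 0 0] by simp

lemma cinner_minus_left: "cinner (- x) y = - cinner x y"
  using cinner_scaleR_left[of "-1" x y] by simp

lemma cinner_minus_right: "cinner x (- y) = - cinner x y"
  using cinner_scaleR_right[of x "-1" y] by simp

lemma cinner_diff_left: "cinner (x - y) z = cinner x z - cinner y z"
  by (metis cinner_add_left cinner_minus_left diff_conv_add_uminus)

lemma cinner_diff_right: "cinner x (y - z) = cinner x y - cinner x z"
  by (metis cinner_add_right cinner_minus_right diff_conv_add_uminus)

lemma cinner_self: "cinner x x = of_real ((norm x)\<^sup>2)"
  using cinner_self_real_nonneg[of x] norm_eq_sqrt_cinner[of x]
  by (simp add: complex_eq_iff)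

lemma cinner_eqI: assumes "\<And>z. cinner z u = cinner z v" shows "u = v"
proof -
  have "cinner (u - v) (u - v) = 0" by (simp add: cinner_diff_right assms)
  then show ?thesis using cinner_self_eq_zero by (metis eq_iff_diff_eq_0)
qed

lemma cinner_orthogonal_commute: "cinner x y = 0 \<longleftrightarrow> cinner y x = 0"
  by (metis cinner_commute complex_cnj_zero_iff)

lemma power2_norm_eq_cinner: "(norm x)\<^sup>2 = Re (cinner x x)"
  by (simp add: cinner_self)

lemma power2_norm_add: "(norm (x + y))\<^sup>2 = (norm x)\<^sup>2 + (norm y)\<^sup>2 + 2 * Re (cinner x y)"
proof -
  have "Re (cinner y x) = Re (cinner x y)" by (subst cinner_commute) simp
  then show ?thesis
    by (simp add: power2_norm_eq_cinner cinner_add_left cinner_add_right)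
qed

lemma power2_norm_diff: "(norm (x - y))\<^sup>2 = (norm x)\<^sup>2 + (norm y)\<^sup>2 - 2 * Re (cinner x y)"
  using power2_norm_add[of x "- y"] by (simp add: cinner_minus_right)

lemma norm_scaleC: "norm (scaleC c x) = cmod c * norm x"
proof -
  have "(norm (scaleC c x))\<^sup>2 = Re (c * cnj c * cinner x x)"
    by (simp only: power2_norm_eq_cinner cinner_scaleC_left cinner_scaleC_right ac_simps)
  also have "\<dots> = (cmod c * norm x)\<^sup>2"
    by (simp add: cinner_self power_mult_distrib flip: complex_norm_square)
  finally show ?thesis by simp
qed

lemma cinner_sgn_right: "cinner x (sgn x) = of_real (norm x)"
proof (cases "x = 0")
  case False
  then have "inverse (norm x) * (norm x)\<^sup>2 = norm x" by (simp add: power2_eq_square)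
  then show ?thesis by (metis cinner_scaleR_right cinner_self of_real_mult sgn_div_norm)
qed simp

lemma cinner_sgn_left: "cinner (sgn x) x = of_real (norm x)"
  using cinner_sgn_right[of x] cinner_commute[of "sgn x" x] by simp

lemma norm_cinner_le: "cmod (cinner u v) \<le> norm u * norm v"
proof (cases "v = 0")
  case False
  define l where "l = cinner u v / of_real ((norm v)\<^sup>2)"
  define r where "r = u - scaleC l v"
  have "cinner r v = 0"
    using False by (simp add: r_def l_def cinner_diff_left cinner_scaleC_left cinner_self)
  then have "cinner r r = cinner u r"
    by (subst (1) r_def) (simp add: cinner_diff_left cinner_scaleC_left cinner_orthogonal_commute)
  also have "\<dots> = cinner u u - cnj l * cinner u v"
    by (simp add: r_def cinner_diff_right cinner_scaleC_right)
  also have "cnj l * cinner u v = cinner u v * cnj (cinner u v) / of_real ((norm v)\<^sup>2)"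
    by (simp add: l_def)
  also have "\<dots> = of_real ((cmod (cinner u v))\<^sup>2 / (norm v)\<^sup>2)"
    by (simp only: of_real_divide complex_norm_square)
  finally have "(cmod (cinner u v))\<^sup>2 / (norm v)\<^sup>2 \<le> (norm u)\<^sup>2"
    using cinner_self_real_nonneg[of r] by (simp add: cinner_self)
  then have "(cmod (cinner u v))\<^sup>2 \<le> (norm u * norm v)\<^sup>2"
    using False by (simp add: divide_le_eq power_mult_distrib)
  then show ?thesis by (rule power2_le_imp_le) simp
qed simp

lemma power2_norm_orthonormal_combination:
  assumes "norm x = 1" "norm w = 1" "cinner x w = 0"
  shows "(norm (scaleC \<alpha> x + scaleC \<beta> w))\<^sup>2 = (cmod \<alpha>)\<^sup>2 + (cmod \<beta>)\<^sup>2"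
  using assms by (simp add: power2_norm_add norm_scaleC cinner_scaleC_left cinner_scaleC_right)

lemma unit_vector_decomposition:
  assumes x: "norm x = 1" and y: "norm y = 1"
  obtains (parallel) c where "y = scaleC c x" "cmod c = 1"
  | (orthogonal) c w \<rho> where "norm w = 1" "cinner x w = 0"
      "y = scaleC c x + scaleC (of_real \<rho>) w" "(cmod c)\<^sup>2 + \<rho>\<^sup>2 = 1"
proof -
  define c where "c = cinner y x"
  define r where "r = y - scaleC c x"
  have "cinner r x = 0"
    using x by (simp add: r_def c_def cinner_diff_left cinner_scaleC_left cinner_self)
  show ?thesis
  proof (cases "r = 0")
    case True
    then have "y = scaleC c x"
      by (simp add: r_def)
    moreover from this have "cmod c = 1"
      using x y by (simp add: norm_scaleC)
    ultimately show ?thesis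
      by (rule parallel)
  next
    case False
    define w where "w = sgn r"
    have w: "norm w = 1" "cinner x w = 0"
      using False \<open>cinner r x = 0\<close>
      by (simp_all add: w_def norm_sgn sgn_div_norm cinner_scaleR_right cinner_orthogonal_commute)
    have "norm r *\<^sub>R w = r"
      using False by (simp add: w_def sgn_div_norm)
    then have y_eq: "y = scaleC c x + scaleC (of_real (norm r)) w"
      by (simp add: scaleC_of_real r_def)
    moreover have "(cmod c)\<^sup>2 + (norm r)\<^sup>2 = 1"
      using power2_norm_orthonormal_combination[OF x w, of c "of_real (norm r)"] y
      by (simp flip: y_eq)
    ultimately show ?thesis
      by (intro orthogonal[OF w])
  qed
qed

lemma exists_unit_vector_detecting_norm_difference:
  fixes p q x :: "'a::complex_inner"
  assumes "cinner p x = 0" "cinner q x = 0" "p \<noteq> 0 \<or> q \<noteq> 0"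
  shows "\<exists>w. norm w = 1 \<and> cinner x w = 0 \<and>
           \<bar>(norm p)\<^sup>2 - (norm q)\<^sup>2\<bar> \<le> \<bar>(cmod (cinner p w))\<^sup>2 - (cmod (cinner w q))\<^sup>2\<bar>"
proof (cases "norm q \<le> norm p")
  case True
  then have "p \<noteq> 0"
    using assms(3) by auto
  then have "norm (sgn p) = 1" "cinner x (sgn p) = 0"
    using assms(1) by (simp_all add: norm_sgn sgn_div_norm cinner_scaleR_right cinner_orthogonal_commute)
  moreover have "(cmod (cinner (sgn p) q))\<^sup>2 \<le> (norm q)\<^sup>2"
    using norm_cinner_le[of "sgn p" q] \<open>norm (sgn p) = 1\<close> by (simp add: power_mono)
  moreover have "(norm q)\<^sup>2 \<le> (norm p)\<^sup>2"
    using True by (simp add: power_mono)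
  ultimately show ?thesis
    by (intro exI[of _ "sgn p"]) (simp add: cinner_sgn_right)
next
  case False
  then have "q \<noteq> 0"
    by auto
  then have "norm (sgn q) = 1" "cinner x (sgn q) = 0"
    using assms(2) by (simp_all add: norm_sgn sgn_div_norm cinner_scaleR_right cinner_orthogonal_commute)
  moreover have "(cmod (cinner p (sgn q)))\<^sup>2 \<le> (norm p)\<^sup>2"
    using norm_cinner_le[of p "sgn q"] \<open>norm (sgn q) = 1\<close> by (simp add: power_mono)
  moreover have "(norm p)\<^sup>2 \<le> (norm q)\<^sup>2"
    using False by (simp add: power_mono)
  ultimately show ?thesis
    by (intro exI[of _ "sgn q"]) (simp add: cinner_sgn_left)
qed

lemma norm_le_if_Re_cinner_le:
  fixes u x :: "'a::complex_inner"
  assumes "x \<noteq> 0" and le: "\<And>y. 2 * Re (cinner u y) \<le> M * ((norm x)\<^sup>2 + (norm y)\<^sup>2)"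
  shows "norm u \<le> M * norm x"
proof (cases "u = 0")
  case True
  then show ?thesis
    using le[of 0] assms(1) by (simp add: zero_le_mult_iff)
next
  case False
  have "2 * (norm x * norm u) \<le> M * (2 * (norm x)\<^sup>2)"
    using le[of "norm x *\<^sub>R sgn u"] False by (simp add: cinner_scaleR_right cinner_sgn_right norm_sgn)
  then show ?thesis
    using assms(1) by (simp add: power2_eq_square mult.commute mult.left_commute)
qed

section \<open>Lines, spheres and the Hopf map\<close>

lemma linear_nontrivial_kernel:
  fixes f :: "'a::euclidean_space \<Rightarrow> 'b::euclidean_space"
  assumes "linear f" "DIM('b) < DIM('a)"
  shows "\<exists>k. k \<noteq> 0 \<and> f k = 0"
proof (rule ccontr)
  assume "\<nexists>k. k \<noteq> 0 \<and> f k = 0"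
  then have "inj f"
    using assms(1) by (auto simp: linear_inj_iff_eq_0)
  then have "dim (range f) = DIM('a)"
    using assms(1) by (simp add: dim_image_eq)
  moreover have "dim (range f) \<le> DIM('b)"
    by (metis dim_subset_UNIV)
  ultimately show False
    using assms(2) by simp
qed

lemma line_meets_sphere:
  fixes v k c :: "'a::real_inner"
  assumes "k \<noteq> 0" "v \<in> cball c r"
  shows "\<exists>\<sigma>. v + \<sigma> *\<^sub>R k \<in> sphere c r"
proof -
  define d where "d = v - c"
  have dr: "norm d \<le> r"
    using assms(2) by (simp add: d_def dist_norm norm_minus_commute)
  then have "(norm k)\<^sup>2 * ((norm d)\<^sup>2 - r\<^sup>2) \<le> 0"
    by (intro mult_nonneg_nonpos) (simp_all add: power_mono)
  then have "discrim ((norm k)\<^sup>2) (2 * (d \<bullet> k)) ((norm d)\<^sup>2 - r\<^sup>2) \<ge> 0"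
    unfolding discrim_def
    by (simp add: power_mult_distrib) (use zero_le_power2[of "d \<bullet> k"] in linarith)
  then obtain \<sigma> where "(norm k)\<^sup>2 * \<sigma>\<^sup>2 + 2 * (d \<bullet> k) * \<sigma> + ((norm d)\<^sup>2 - r\<^sup>2) = 0"
    using assms(1) discriminant_nonneg_ex by force
  then have "(norm (d + \<sigma> *\<^sub>R k))\<^sup>2 = r\<^sup>2"
    by (simp add: power2_norm_eq_inner inner_commute algebra_simps) (simp add: power2_eq_square ac_simps)
  then have "norm (d + \<sigma> *\<^sub>R k) = r"
    using dr norm_ge_zero power2_eq_iff_nonneg by (metis order.trans)
  then show ?thesis
    by (auto simp: d_def dist_norm norm_minus_commute algebra_simps)
qed

lemma norm_Pair_power2: "(norm (s, z))\<^sup>2 = (norm s)\<^sup>2 + (norm z)\<^sup>2"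
  by (simp add: norm_Pair)

lemma Hopf_map_onto_sphere:
  "sphere (0::real \<times> complex) (1/2) =
     (\<lambda>(\<alpha>, \<beta>). ((cmod \<alpha>)\<^sup>2 - 1/2, \<alpha> * cnj \<beta>)) ` {(\<alpha>, \<beta>). (cmod \<alpha>)\<^sup>2 + (cmod \<beta>)\<^sup>2 = 1}"
proof (intro set_eqI iffI)
  fix v :: "real \<times> complex"
  assume "v \<in> sphere 0 (1/2)"
  then have "(norm v)\<^sup>2 = (1/2)\<^sup>2"
    by simp
  moreover obtain s \<zeta> where v: "v = (s, \<zeta>)"
    by (cases v)
  ultimately have sphere: "s\<^sup>2 + (cmod \<zeta>)\<^sup>2 = 1/4"
    by (simp add: norm_Pair_power2 power_divide)
  define \<tau> where "\<tau> = s + 1/2"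
  have "s\<^sup>2 \<le> 1/4"
    using sphere zero_le_power2[of "cmod \<zeta>"] by linarith
  then have "\<bar>s\<bar> \<le> 1/2"
    using abs_le_square_iff[of s "1/2"] by (simp add: power_divide)
  then have \<tau>: "(cmod \<zeta>)\<^sup>2 = \<tau> * (1 - \<tau>)" "\<tau> \<ge> 0"
    using sphere by (auto simp: \<tau>_def algebra_simps power2_eq_square)
  show "v \<in> (\<lambda>(\<alpha>, \<beta>). ((cmod \<alpha>)\<^sup>2 - 1/2, \<alpha> * cnj \<beta>)) ` {(\<alpha>, \<beta>). (cmod \<alpha>)\<^sup>2 + (cmod \<beta>)\<^sup>2 = 1}"
  proof (cases "\<tau> = 0")
    case True
    then show ?thesis
      using \<tau> by (intro image_eqI[of _ _ "(0, 1)"]) (auto simp: v \<tau>_def)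
  next
    case False
    define \<alpha> where "\<alpha> = complex_of_real (sqrt \<tau>)"
    define \<beta> where "\<beta> = cnj \<zeta> / \<alpha>"
    have "(cmod \<alpha>)\<^sup>2 = \<tau>" "\<alpha> * cnj \<beta> = \<zeta>"
      using False \<tau> by (simp_all add: \<alpha>_def \<beta>_def)
    moreover have "(cmod \<beta>)\<^sup>2 = 1 - \<tau>"
      using False \<tau> by (simp add: \<alpha>_def \<beta>_def norm_divide power_divide)
    ultimately show ?thesis
      by (intro image_eqI[of _ _ "(\<alpha>, \<beta>)"]) (auto simp: v \<tau>_def)
  qed
next
  fix v :: "real \<times> complex"
  assume "v \<in> (\<lambda>(\<alpha>, \<beta>). ((cmod \<alpha>)\<^sup>2 - 1/2, \<alpha> * cnj \<beta>)) ` {(\<alpha>, \<beta>). (cmod \<alpha>)\<^sup>2 + (cmod \<beta>)\<^sup>2 = 1}"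
  then obtain \<alpha> \<beta> where v: "v = ((cmod \<alpha>)\<^sup>2 - 1/2, \<alpha> * cnj \<beta>)"
    and one: "(cmod \<alpha>)\<^sup>2 + (cmod \<beta>)\<^sup>2 = 1"
    by auto
  have "(norm v)\<^sup>2 = ((cmod \<alpha>)\<^sup>2 - 1/2)\<^sup>2 + (cmod \<alpha>)\<^sup>2 * (cmod \<beta>)\<^sup>2"
    by (simp add: v norm_Pair_power2 norm_mult power_mult_distrib)
  also have "\<dots> = (1/2)\<^sup>2"
    using one by (simp add: eq_diff_eq[symmetric] power2_diff power_divide) (simp add: algebra_simps)
  finally show "v \<in> sphere 0 (1/2)"
    by simp
qed

section \<open>Lebesgue measure on the complex plane\<close>

text \<open>Lebesgue measure on \<open>\<complex>\<close> is transported from \<open>real^2\<close>, where the change of variables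
  formula for linear maps is available.\<close>

definition complex_of_vec2 :: "real^2 \<Rightarrow> complex" where
  "complex_of_vec2 v = Complex (v$1) (v$2)"

definition vec2_of_complex :: "complex \<Rightarrow> real^2" where
  "vec2_of_complex z = vector [Re z, Im z]"

lemma vec2_of_complex_of_vec2 [simp]: "vec2_of_complex (complex_of_vec2 v) = v"
  unfolding complex_of_vec2_def vec2_of_complex_def by (simp add: vec_eq_iff forall_2)

lemma complex_of_vec2_of_complex [simp]: "complex_of_vec2 (vec2_of_complex z) = z"
  unfolding complex_of_vec2_def vec2_of_complex_def by simp

lemma linear_complex_of_vec2: "linear complex_of_vec2"
  by (rule linearI) (simp_all add: complex_of_vec2_def complex_eq_iff)

lemma linear_vec2_of_complex: "linear vec2_of_complex"
  by (rule linearI) (simp_all add: vec2_of_complex_def vec_eq_iff forall_2)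

lemma continuous_on_complex_of_vec2: "continuous_on S complex_of_vec2"
  using linear_complex_of_vec2 linear_conv_bounded_linear linear_continuous_on by blast

lemma continuous_on_vec2_of_complex: "continuous_on S vec2_of_complex"
  using linear_vec2_of_complex linear_conv_bounded_linear linear_continuous_on by blast

lemma lborel_distr_complex_of_vec2: "distr lborel borel complex_of_vec2 = lborel"
proof (rule lborel_eqI[symmetric])
  fix l u :: complex assume le: "\<And>b. b \<in> Basis \<Longrightarrow> l \<bullet> b \<le> u \<bullet> b"
  have "complex_of_vec2 -` box l u = box (vec2_of_complex l) (vec2_of_complex u)"
    by (auto simp: complex_of_vec2_def vec2_of_complex_def mem_box_cart forall_2
        mem_box Basis_complex_def)
  moreover have "complex_of_vec2 \<in> borel_measurable lborel"
    by (simp add: borel_measurable_continuous_onI continuous_on_complex_of_vec2)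
  ultimately have "emeasure (distr lborel borel complex_of_vec2) (box l u)
      = emeasure lborel (box (vec2_of_complex l) (vec2_of_complex u))"
    by (simp add: emeasure_distr)
  also have "\<dots> = (\<Prod>b\<in>Basis. (u - l) \<bullet> b)"
    using le[of 1] le[of \<i>]
    by (simp add: emeasure_lborel_box_eq Basis_vec_def UNIV_2 axis_eq_axis inner_axis
        Basis_complex_def vec2_of_complex_def)
  finally show "emeasure (distr lborel borel complex_of_vec2) (box l u) = (\<Prod>b\<in>Basis. (u - l) \<bullet> b)" .
qed simp

lemma measure_complex_of_vec2_image:
  assumes "compact K"
  shows "measure lebesgue (complex_of_vec2 ` K) = measure lebesgue K"
proof -
  have compact: "compact (complex_of_vec2 ` K)"
    using assms by (intro compact_continuous_image continuous_on_complex_of_vec2)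
  have "complex_of_vec2 -` complex_of_vec2 ` K = K"
    by (metis inj_on_def inj_vimage_image_eq vec2_of_complex_of_vec2)
  then have "measure lborel (complex_of_vec2 ` K) = measure lborel K"
    using compact
    by (subst (1) lborel_distr_complex_of_vec2[symmetric])
      (simp add: measure_distr borel_measurable_continuous_onI continuous_on_complex_of_vec2
        compact_imp_closed borel_closed)
  then show ?thesis
    using assms compact by (simp add: compact_imp_closed borel_closed)
qed

lemma measure_real_linear_image_complex:
  fixes c b :: complex
  assumes "compact K"
  shows "measure lebesgue ((\<lambda>\<eta>. c * \<eta> + b * cnj \<eta>) ` K) = \<bar>(cmod c)\<^sup>2 - (cmod b)\<^sup>2\<bar> * measure lebesgue K"
proof -
  define f where "f = vec2_of_complex \<circ> (\<lambda>\<eta>. c * \<eta> + b * cnj \<eta>) \<circ> complex_of_vec2"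
  define K' where "K' = vec2_of_complex ` K"
  have f: "linear f"
    unfolding f_def
    by (intro linear_compose[OF linear_complex_of_vec2] linear_compose[OF _ linear_vec2_of_complex])
      (rule linearI; simp add: algebra_simps)
  have K: "K = complex_of_vec2 ` K'" "compact K'"
    using assms
    by (auto simp: K'_def image_image intro: compact_continuous_image continuous_on_vec2_of_complex)
  have "(\<lambda>\<eta>. c * \<eta> + b * cnj \<eta>) ` K = complex_of_vec2 ` f ` K'"
    unfolding K(1) f_def image_comp by (simp add: comp_def)
  then have "measure lebesgue ((\<lambda>\<eta>. c * \<eta> + b * cnj \<eta>) ` K) = \<bar>det (matrix f)\<bar> * measure lebesgue K'"
    using K f
    by (simp add: measure_complex_of_vec2_image compact_continuous_image linear_continuous_on
        linear_conv_bounded_linear measure_linear_image[OF f] lmeasurable_compact)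
  also have "det (matrix f) = (cmod c)\<^sup>2 - (cmod b)\<^sup>2"
    by (simp add: det_2 matrix_def f_def complex_of_vec2_def vec2_of_complex_def axis_def
        cmod_def algebra_simps power2_eq_square)
  also have "measure lebesgue K' = measure lebesgue K"
    using K by (simp add: measure_complex_of_vec2_image)
  finally show ?thesis .
qed

lemma measure_complex_square:
  assumes "h \<ge> 0"
  shows "measure lebesgue (cbox (- Complex h h) (Complex h h)) = (2 * h)\<^sup>2"
proof -
  have "0 \<in> cbox (- Complex h h) (Complex h h)"
    using assms by (simp add: mem_box Basis_complex_def)
  then show ?thesis
    by (auto simp: content_cbox_if Basis_complex_def power2_eq_square)
qed

section \<open>Compressions to two-dimensional subspaces\<close>

locale clinear_operator =
  fixes A :: "'a::complex_inner \<Rightarrow> 'a"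
  assumes bounded_clinear: "bounded_clinear_op A"
begin

lemma add: "A (x + y) = A x + A y"
  using bounded_clinear by (simp add: bounded_clinear_op_def)

lemma scaleC: "A (scaleC c x) = scaleC c (A x)"
  using bounded_clinear by (simp add: bounded_clinear_op_def)

lemma real_linear: "linear A"
  by (rule linearI) (simp_all add: add flip: scaleC_of_real scaleC)

text \<open>The numerical range of the compression of \<open>A\<close> to \<open>span {x, w}\<close>, parametrised by the
  sphere of radius \<open>1/2\<close> through the Hopf map.\<close>

definition compression_point :: "'a \<Rightarrow> 'a \<Rightarrow> real \<times> complex \<Rightarrow> complex" where
  "compression_point x w v =
     (cinner (A x) x + cinner (A w) w) / 2 + of_real (fst v) * (cinner (A x) x - cinner (A w) w)
     + cinner (A x) w * snd v + cinner (A w) x * cnj (snd v)"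

lemma cinner_combination_eq_compression_point:
  assumes "(cmod \<alpha>)\<^sup>2 + (cmod \<beta>)\<^sup>2 = 1"
  shows "cinner (A (scaleC \<alpha> x + scaleC \<beta> w)) (scaleC \<alpha> x + scaleC \<beta> w)
           = compression_point x w ((cmod \<alpha>)\<^sup>2 - 1/2, \<alpha> * cnj \<beta>)"
proof -
  have expand: "cinner (A (scaleC \<alpha> x + scaleC \<beta> w)) (scaleC \<alpha> x + scaleC \<beta> w)
      = \<alpha> * cnj \<alpha> * cinner (A x) x + \<alpha> * cnj \<beta> * cinner (A x) w
        + \<beta> * cnj \<alpha> * cinner (A w) x + \<beta> * cnj \<beta> * cinner (A w) w"
    by (simp add: add scaleC cinner_add_left cinner_add_right cinner_scaleC_left
        cinner_scaleC_right algebra_simps)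
  have "(cmod \<beta>)\<^sup>2 = 1 - (cmod \<alpha>)\<^sup>2"
    using assms by simp
  then show ?thesis
    unfolding expand
    by (simp only: flip: complex_norm_square) (simp add: compression_point_def field_simps)
qed

lemma compression_point_sphere_in_numerical_range:
  assumes "norm x = 1" "norm w = 1" "cinner x w = 0" and "v \<in> sphere 0 (1/2)"
  shows "compression_point x w v \<in> numerical_range A"
proof -
  obtain \<alpha> \<beta> where v: "v = ((cmod \<alpha>)\<^sup>2 - 1/2, \<alpha> * cnj \<beta>)"
    and one: "(cmod \<alpha>)\<^sup>2 + (cmod \<beta>)\<^sup>2 = 1"
    using assms(4) unfolding Hopf_map_onto_sphere by auto
  define z where "z = scaleC \<alpha> x + scaleC \<beta> w"
  have "(norm z)\<^sup>2 = 1"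
    using power2_norm_orthonormal_combination[OF assms(1-3), of \<alpha> \<beta>] one by (simp add: z_def)
  then have "norm z = 1"
    by (smt (verit) norm_ge_zero power2_eq_1_iff)
  moreover have "cinner (A z) z = compression_point x w v"
    using cinner_combination_eq_compression_point[OF one] by (simp add: z_def v)
  ultimately show ?thesis
    unfolding numerical_range_def by (auto intro!: exI[of _ z])
qed

text \<open>The linear part of \<open>compression_point x w\<close> maps \<open>\<real>\<^sup>3\<close> to \<open>\<real>\<^sup>2\<close>, so moving from \<open>v\<close>
  along a kernel direction reaches the sphere without changing the value.\<close>

lemma compression_point_in_numerical_range:
  assumes "norm x = 1" "norm w = 1" "cinner x w = 0" and "v \<in> cball 0 (1/2)"
  shows "compression_point x w v \<in> numerical_range A"
proof -
  define L where "L v = of_real (fst v) * (cinner (A x) x - cinner (A w) w)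
     + cinner (A x) w * snd v + cinner (A w) x * cnj (snd v)" for v :: "real \<times> complex"
  have cp: "compression_point x w v = (cinner (A x) x + cinner (A w) w) / 2 + L v" for v
    by (simp add: compression_point_def L_def)
  have "linear L"
    by (rule linearI) (simp_all add: L_def scaleR_conv_of_real algebra_simps)
  then obtain k where "k \<noteq> 0" "L k = 0"
    using linear_nontrivial_kernel[of L] by auto
  moreover obtain \<sigma> where sphere: "v + \<sigma> *\<^sub>R k \<in> sphere 0 (1/2)"
    using line_meets_sphere[OF \<open>k \<noteq> 0\<close> assms(4)] by blast
  ultimately have "compression_point x w (v + \<sigma> *\<^sub>R k) = compression_point x w v"
    using \<open>linear L\<close> by (simp add: cp linear_add linear_scale)
  then show ?thesis
    using compression_point_sphere_in_numerical_range[OF assms(1-3) sphere] by simp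
qed

lemma compression_point_convex_combination:
  "compression_point x w ((1 - u) *\<^sub>R v + u *\<^sub>R v') =
     (1 - u) *\<^sub>R compression_point x w v + u *\<^sub>R compression_point x w v'"
  by (simp add: compression_point_def scaleR_conv_of_real field_simps)

lemma numerical_range_convex: "convex (numerical_range A)"
  unfolding convex_alt
proof (intro ballI allI impI)
  fix p p' and u :: real
  assume "p \<in> numerical_range A" "p' \<in> numerical_range A" and u: "0 \<le> u \<and> u \<le> 1"
  then obtain x y where p: "p = cinner (A x) x" and x: "norm x = 1"
    and p': "p' = cinner (A y) y" and y: "norm y = 1"
    unfolding numerical_range_def by blast
  from x y show "(1 - u) *\<^sub>R p + u *\<^sub>R p' \<in> numerical_range A"
  proof (cases rule: unit_vector_decomposition)
    case (parallel c)
    then have "p' = c * cnj c * p"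
      by (simp add: p p' scaleC cinner_scaleC_left cinner_scaleC_right)
    moreover have "c * cnj c = 1"
      using complex_norm_square[of c] parallel(2) by simp
    ultimately have "(1 - u) *\<^sub>R p + u *\<^sub>R p' = p"
      by (simp add: algebra_simps)
    then show ?thesis
      using \<open>p \<in> numerical_range A\<close> by simp
  next
    case (orthogonal c w \<rho>)
    then have one: "(cmod c)\<^sup>2 + (cmod (of_real \<rho>))\<^sup>2 = 1"
      by simp
    define v where "v = ((1/2 :: real), (0 :: complex))"
    define v' where "v' = ((cmod c)\<^sup>2 - 1/2, c * cnj (of_real \<rho>))"
    have "p = compression_point x w v"
      using cinner_combination_eq_compression_point[of 1 0 x w] by (simp add: p v_def scaleC_one)
    moreover have "p' = compression_point x w v'"
      using cinner_combination_eq_compression_point[OF one, of x w] orthogonal(3)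
      by (simp add: p' v'_def)
    moreover have "v' \<in> sphere 0 (1/2)"
      unfolding Hopf_map_onto_sphere v'_def using one
      by (intro image_eqI[of _ _ "(c, of_real \<rho>)"]) auto
    then have "v \<in> cball 0 (1/2)" "v' \<in> cball 0 (1/2)"
      by (auto simp: v_def)
    then have "(1 - u) *\<^sub>R v + u *\<^sub>R v' \<in> cball 0 (1/2)"
      using u convex_cball[of 0 "1/2"] unfolding convex_alt by blast
    ultimately show ?thesis
      using compression_point_in_numerical_range[OF x orthogonal(1,2)]
      by (simp flip: compression_point_convex_combination)
  qed
qed

lemma numerical_range_bounded: "bounded (numerical_range A)"
proof -
  obtain K where K: "\<And>x. norm (A x) \<le> K * norm x"
    using bounded_clinear by (auto simp: bounded_clinear_op_def)
  have "cmod (cinner (A x) x) \<le> K" if "norm x = 1" for x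
    using norm_cinner_le[of "A x" x] K[of x] that by simp
  then show ?thesis
    unfolding bounded_iff numerical_range_def by blast
qed

text \<open>The square of side \<open>1/\<surd>2\<close> in the \<open>\<zeta>\<close>-plane lies in the disc of radius \<open>1/2\<close>, and its
  image under \<open>\<zeta> \<mapsto> c \<zeta> + b \<zeta>\<^sup>*\<close> has area \<open>\<bar>\<bar>c\<bar>\<^sup>2 - \<bar>b\<bar>\<^sup>2\<bar> / 2\<close>.\<close>

lemma compression_off_diagonal_le_area:
  assumes "norm x = 1" "norm w = 1" "cinner x w = 0"
  shows "\<bar>(cmod (cinner (A x) w))\<^sup>2 - (cmod (cinner (A w) x))\<^sup>2\<bar>
           \<le> 2 * measure lebesgue (numerical_range A)"
proof -
  define c where "c = cinner (A x) w"
  define b where "b = cinner (A w) x"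
  define m where "m = (cinner (A x) x + cinner (A w) w) / 2"
  define h where "h = sqrt 2 / 4"
  define S where "S = cbox (- Complex h h) (Complex h h)"
  define P where "P = (+) m ` (\<lambda>\<eta>. c * \<eta> + b * cnj \<eta>) ` S"
  have h: "h \<ge> 0" "h\<^sup>2 = 1/8"
    by (simp_all add: h_def power_divide)
  have "P \<subseteq> numerical_range A"
  proof
    fix p assume "p \<in> P"
    then obtain \<eta> where p: "p = m + (c * \<eta> + b * cnj \<eta>)" and "\<eta> \<in> S"
      unfolding P_def by blast
    then have "\<bar>Re \<eta>\<bar> \<le> h" "\<bar>Im \<eta>\<bar> \<le> h"
      by (auto simp: S_def mem_box Basis_complex_def)
    then have "(Re \<eta>)\<^sup>2 \<le> h\<^sup>2" "(Im \<eta>)\<^sup>2 \<le> h\<^sup>2"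
      using h(1) by (simp_all add: abs_le_square_iff[symmetric])
    then have "(cmod \<eta>)\<^sup>2 \<le> (1/2)\<^sup>2"
      using h(2) by (simp add: cmod_power2 power_divide)
    then have "cmod \<eta> \<le> 1/2"
      by (rule power2_le_imp_le) simp
    then have "norm (0 :: real, \<eta>) \<le> 1/2"
      by (simp add: norm_Pair)
    then have "(0, \<eta>) \<in> cball (0 :: real \<times> complex) (1/2)"
      by simp
    moreover have "compression_point x w (0, \<eta>) = p"
      by (simp add: compression_point_def p m_def b_def c_def)
    ultimately show "p \<in> numerical_range A"
      using compression_point_in_numerical_range[OF assms] by blast
  qed
  moreover have "numerical_range A \<in> lmeasurable"
    by (rule measurable_convex[OF numerical_range_convex numerical_range_bounded])
  moreover have "compact ((\<lambda>\<eta>. c * \<eta> + b * cnj \<eta>) ` S)"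
    unfolding S_def by (intro compact_continuous_image continuous_intros) simp
  then have "P \<in> sets lebesgue"
    unfolding P_def using compact_translation lmeasurable_compact fmeasurable_def by blast
  ultimately have "measure lebesgue P \<le> measure lebesgue (numerical_range A)"
    by (intro measure_mono_fmeasurable)
  moreover have "measure lebesgue S = 1/2"
    using measure_complex_square[OF h(1)] h(2) by (simp add: S_def power_mult_distrib)
  then have "measure lebesgue P = \<bar>(cmod c)\<^sup>2 - (cmod b)\<^sup>2\<bar> / 2"
    unfolding P_def measure_translation
    by (simp add: measure_real_linear_image_complex S_def)
  ultimately show ?thesis
    by (simp add: b_def c_def)
qed

end

section \<open>The self-commutator\<close>

locale adjoint_pair = clinear_operator A for A :: "'a::complex_inner \<Rightarrow> 'a" +
  fixes B :: "'a \<Rightarrow> 'a"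
  assumes adjoint: "is_adjoint A B"
begin

lemma cinner_adjoint: "cinner (A x) y = cinner x (B y)"
  using adjoint by (simp add: is_adjoint_def)

lemma adjoint_cinner: "cinner (B x) y = cinner x (A y)"
  by (metis cinner_adjoint cinner_commute)

lemma adjoint_real_linear: "linear B"
proof (rule linearI)
  show "B (x + y) = B x + B y" for x y
    by (rule cinner_eqI) (simp add: cinner_adjoint[symmetric] cinner_add_right add)
  show "B (r *\<^sub>R x) = r *\<^sub>R B x" for r x
    by (rule cinner_eqI) (simp add: cinner_adjoint[symmetric] cinner_scaleR_right linear_scale real_linear)
qed

definition commutator_form :: "'a \<Rightarrow> real" where
  "commutator_form z = (norm (A z))\<^sup>2 - (norm (B z))\<^sup>2"

lemma self_commutator_polarization:
  "4 * Re (cinner (B (A x) - A (B x)) y) = commutator_form (x + y) - commutator_form (x - y)"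
  using real_linear adjoint_real_linear
  by (simp add: commutator_form_def cinner_diff_left adjoint_cinner cinner_adjoint
      linear_add linear_diff power2_norm_add power2_norm_diff)

lemma commutator_form_scaleR: "commutator_form (r *\<^sub>R z) = r\<^sup>2 * commutator_form z"
  using real_linear adjoint_real_linear
  by (simp add: commutator_form_def linear_scale algebra_simps)

lemma abs_commutator_form_unit_le:
  assumes x: "norm x = 1"
  shows "\<bar>commutator_form x\<bar> \<le> 2 * measure lebesgue (numerical_range A)"
proof -
  define a where "a = cinner (A x) x"
  define p where "p = A x - scaleC a x"
  define q where "q = B x - scaleC (cnj a) x"
  have xx: "cinner x x = 1"
    using x by (simp add: cinner_self)
  have "cinner p x = 0" "cinner q x = 0"
    using adjoint_cinner[of x x] cinner_commute[of x "A x"]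
    by (simp_all add: p_def q_def a_def cinner_diff_left cinner_scaleC_left xx)
  then have "(norm (A x))\<^sup>2 = (cmod a)\<^sup>2 + (norm p)\<^sup>2" "(norm (B x))\<^sup>2 = (cmod a)\<^sup>2 + (norm q)\<^sup>2"
    using power2_norm_add[of "scaleC a x" p] power2_norm_add[of "scaleC (cnj a) x" q] x
    by (simp_all add: p_def q_def norm_scaleC cinner_scaleC_left cinner_orthogonal_commute)
  then have Q: "commutator_form x = (norm p)\<^sup>2 - (norm q)\<^sup>2"
    by (simp add: commutator_form_def)
  show ?thesis
  proof (cases "p = 0 \<and> q = 0")
    case False
    then obtain w where w: "norm w = 1" "cinner x w = 0"
      and le: "\<bar>(norm p)\<^sup>2 - (norm q)\<^sup>2\<bar> \<le> \<bar>(cmod (cinner p w))\<^sup>2 - (cmod (cinner w q))\<^sup>2\<bar>"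
      using exists_unit_vector_detecting_norm_difference[OF \<open>cinner p x = 0\<close> \<open>cinner q x = 0\<close>]
      by blast
    have "cinner (A x) w = cinner p w" "cinner (A w) x = cinner w q"
      using w(2) by (simp_all add: p_def q_def cinner_diff_left cinner_diff_right cinner_adjoint
          cinner_scaleC_left cinner_scaleC_right cinner_orthogonal_commute)
    then show ?thesis
      using compression_off_diagonal_le_area[OF x w] le Q by simp
  qed (simp add: Q)
qed

lemma abs_commutator_form_le:
  "\<bar>commutator_form z\<bar> \<le> 2 * measure lebesgue (numerical_range A) * (norm z)\<^sup>2"
proof (cases "z = 0")
  case True
  then show ?thesis
    using real_linear adjoint_real_linear by (simp add: commutator_form_def linear_0)
next
  case False
  then have "z = norm z *\<^sub>R sgn z"
    by (simp add: sgn_div_norm)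
  then have "\<bar>commutator_form z\<bar> = (norm z)\<^sup>2 * \<bar>commutator_form (sgn z)\<bar>"
    by (metis abs_mult abs_power2 commutator_form_scaleR)
  also have "\<dots> \<le> (norm z)\<^sup>2 * (2 * measure lebesgue (numerical_range A))"
    using False by (intro mult_left_mono abs_commutator_form_unit_le) (simp_all add: norm_sgn)
  finally show ?thesis
    by (simp add: mult.commute)
qed

lemma norm_self_commutator_le:
  "norm (B (A x) - A (B x)) \<le> 2 * measure lebesgue (numerical_range A) * norm x"
proof (cases "x = 0")
  case True
  then show ?thesis
    using real_linear adjoint_real_linear by (simp add: linear_0)
next
  case False
  define M where "M = 2 * measure lebesgue (numerical_range A)"
  show ?thesis
    unfolding M_def[symmetric]
  proof (rule norm_le_if_Re_cinner_le[OF False])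
    fix y
    have "4 * Re (cinner (B (A x) - A (B x)) y) \<le> M * (norm (x + y))\<^sup>2 + M * (norm (x - y))\<^sup>2"
      using abs_commutator_form_le[of "x + y"] abs_commutator_form_le[of "x - y"]
      unfolding self_commutator_polarization M_def by linarith
    also have "\<dots> = 2 * (M * ((norm x)\<^sup>2 + (norm y)\<^sup>2))"
      by (simp add: power2_norm_add power2_norm_diff algebra_simps)
    finally show "2 * Re (cinner (B (A x) - A (B x)) y) \<le> M * ((norm x)\<^sup>2 + (norm y)\<^sup>2)"
      by simp
  qed
qed

end

theorem proposition4:
  fixes A Astar :: "'a::complex_hilbert \<Rightarrow> 'a"
  assumes "bounded_clinear_op A"
    and "is_adjoint A Astar"
  shows "onorm (\<lambda>x. Astar (A x) - A (Astar x)) \<le> 2 * measure lebesgue (numerical_range A)"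
proof -
  interpret adjoint_pair A Astar
    using assms by unfold_locales
  show ?thesis
    using norm_self_commutator_le by (intro onorm_bound) simp_all
qed

end
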